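(* Let $E$ be a real or complex Banach space, let $T$ be a strongly continuous one-parameter semigroup on $E$, let $\mathcal U$ be a countably incomplete ultrafilter on an index set $I$, and let ${}^*$ be the nonstandard universe given by the bounded ultrapower with respect to $\mathcal U$. Let $\Phi:\ell^\infty_I(E)/c_{\mathcal U}\to\widehat E$ be the map $\Phi(\langle f_i\rangle+c_{\mathcal U})=\widehat{f}$, where $f\in{}^*E$ is the $\mathcal U$-equivalence class of $\langle f_i\rangle$, and let $\iota: m^T/(c_{\mathcal U}\cap m^T)\to\ell^\infty_I(E)/c_{\mathcal U}$ be $\iota(\langle f_i\rangle+c_{\mathcal U}\cap m^T)=\langle f_i\rangle+c_{\mathcal U}$. Then $\widehat E$ is isomorphic to $\ell^\infty_I(E)/c_{\mathcal U}$ (via $\Phi$), and $\widehat{E}_T$ is isomorphic to $m^T/(c_{\mathcal U}\cap m^T)$; more precisely $\Phi(\iota(m^T/(c_{\mathcal U}\cap m^T)))=\widehat{E}_T$.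
   Context: A semigroup on $E$ is a map $T:[0,\infty)\to\mathcal L(E)$ (bounded linear operators) with $T(0)=\mathrm{Id}$ and $T(s+t)=T(s)T(t)$; it is strongly continuous if $\lim_{t\to0}\|T(t)f-f\|=0$ for every $f\in E$. $\ell^\infty_I(E)$ is the space of bounded $E$-valued families $\langle f_i\rangle_{i\in I}$ with the sup-norm. $c_{\mathcal U}$ is the set of $\langle f_i\rangle\in\ell^\infty_I(E)$ such that for every $\varepsilon>0$ there is $J\in\mathcal U$ with $\|f_i\|<\varepsilon$ for all $i\in J$; $\ell^\infty_I(E)/c_{\mathcal U}$ carries the quotient norm. $\tilde T(t)\langle f_i\rangle:=\langle T(t)f_i\rangle$ is a semigroup on $\ell^\infty_I(E)$, and $m^T:=\{x\in\ell^\infty_I(E):\lim_{t\to0}\|\tilde T(t)x-x\|=0\}$. Nonstandard setting: the bounded ultrapower is the nonstandard universe (superstructure embedding ${}^*$ satisfying transfer for bounded formulas) in which ${}^*E$ consists of $\mathcal U$-equivalence classes of $I$-sequences in $E$, and ${}^*$ acts on $E$ as the diagonal embedding. A nonstandard real $r$ is finite if $|r|<n$ for some standard $n\in\mathbb N$, infinitesimal if $|r|<1/n$ for all standard $n\ge1$; $f\approx g$ means $\|f-g\|$ is infinitesimal. $\mathrm{fin}({}^*E)$ is the set of $f\in{}^*E$ with $\|f\|$ finite, $E_0$ the set of $f$ with $\|f\|$ infinitesimal, $\widehat E=\mathrm{fin}({}^*E)/E_0$ with class map $f\mapsto\widehat f$ and norm $\|\widehat f\|=\mathrm{st}(\|f\|)$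 (standard part). $E_T$ is the set of $f\in\mathrm{fin}({}^*E)$ such that for every standard $\varepsilon>0$ there is a standard $\delta>0$ with $\|{}^*T(t)f-f\|<\varepsilon$ for all positive nonstandard $t<\delta$ (equivalently, $\|{}^*T(h)f-f\|$ is infinitesimal for every positive infinitesimal $h$); $\widehat{E}_T=E_T/E_0\subseteq\widehat E$. *)

theory Defs
  imports "HOL-Analysis.Analysis"
begin

definition strongly_continuous_semigroup :: "(real \<Rightarrow> ('a::banach \<Rightarrow>\<^sub>L 'a)) \<Rightarrow> bool" where
  "strongly_continuous_semigroup T \<longleftrightarrow>
     T 0 = id_blinfun \<and>
     (\<forall>s t. 0 \<le> s \<longrightarrow> 0 \<le> t \<longrightarrow> T (s + t) = T s o\<^sub>L T t) \<and>
     (\<forall>f. ((\<lambda>t. norm (T t f - f)) \<longlongrightarrow> 0) (at_right 0))"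

definition is_ultrafilter :: "'i filter \<Rightarrow> bool" where
  "is_ultrafilter U \<longleftrightarrow> U \<noteq> bot \<and> (\<forall>P. eventually P U \<or> eventually (\<lambda>i. \<not> P i) U)"

definition countably_incomplete :: "'i filter \<Rightarrow> bool" where
  "countably_incomplete U \<longleftrightarrow>
     (\<exists>A :: nat \<Rightarrow> 'i set. (\<forall>n. eventually (\<lambda>i. i \<in> A n) U) \<and>
        \<not> eventually (\<lambda>i. i \<in> (\<Inter>n. A n)) U)"

definition linf :: "('i \<Rightarrow> 'a::real_normed_vector) set" where
  "linf = {f. bounded (range f)}"

definition supnorm :: "('i \<Rightarrow> 'a::real_normed_vector) \<Rightarrow> real" where
  "supnorm f = (SUP i. norm (f i))"

definition cU :: "'i filter \<Rightarrow> ('i \<Rightarrow> 'a::real_normed_vector) set" where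
  "cU U = {f \<in> linf. \<forall>\<epsilon>>0. eventually (\<lambda>i. norm (f i) < \<epsilon>) U}"

definition lq_class :: "'i filter \<Rightarrow> ('i \<Rightarrow> 'a::real_normed_vector) \<Rightarrow> ('i \<Rightarrow> 'a) set" where
  "lq_class U f = {g \<in> linf. (\<lambda>i. g i - f i) \<in> cU U}"

definition lq_space :: "'i filter \<Rightarrow> ('i \<Rightarrow> 'a::real_normed_vector) set set" where
  "lq_space U = lq_class U ` linf"

definition qnorm :: "('i \<Rightarrow> 'a::real_normed_vector) set \<Rightarrow> real" where
  "qnorm X = (INF g\<in>X. supnorm g)"

definition mT :: "(real \<Rightarrow> ('a::banach \<Rightarrow>\<^sub>L 'a)) \<Rightarrow> ('i \<Rightarrow> 'a) set" where
  "mT T = {x \<in> linf. ((\<lambda>t. supnorm (\<lambda>i. T t (x i) - x i)) \<longlongrightarrow> 0) (at_right 0)}"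

definition mq_class :: "'i filter \<Rightarrow> (real \<Rightarrow> ('a::banach \<Rightarrow>\<^sub>L 'a)) \<Rightarrow> ('i \<Rightarrow> 'a) \<Rightarrow> ('i \<Rightarrow> 'a) set" where
  "mq_class U T f = {g \<in> mT T. (\<lambda>i. g i - f i) \<in> cU U \<inter> mT T}"

definition mq_space :: "'i filter \<Rightarrow> (real \<Rightarrow> ('a::banach \<Rightarrow>\<^sub>L 'a)) \<Rightarrow> ('i \<Rightarrow> 'a) set set" where
  "mq_space U T = mq_class U T ` mT T"

definition iota :: "'i filter \<Rightarrow> ('i \<Rightarrow> 'a::real_normed_vector) set \<Rightarrow> ('i \<Rightarrow> 'a) set" where
  "iota U X = lq_class U (SOME f. f \<in> X)"

text \<open>Elements of *E are represented by I-sequences (U-equivalence classes); all notions below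
  are invariant under U-a.e. equality of representatives.\<close>

definition finite_norm :: "'i filter \<Rightarrow> ('i \<Rightarrow> 'a::real_normed_vector) \<Rightarrow> bool" where
  "finite_norm U f \<longleftrightarrow> (\<exists>n::nat. eventually (\<lambda>i. norm (f i) < real n) U)"

definition infinitesimal_norm :: "'i filter \<Rightarrow> ('i \<Rightarrow> 'a::real_normed_vector) \<Rightarrow> bool" where
  "infinitesimal_norm U f \<longleftrightarrow> (\<forall>n::nat. n \<ge> 1 \<longrightarrow> eventually (\<lambda>i. norm (f i) < 1 / real n) U)"

definition fin_star :: "'i filter \<Rightarrow> ('i \<Rightarrow> 'a::real_normed_vector) set" where
  "fin_star U = {f. finite_norm U f}"

text \<open>The class hat f in E-hat = fin( *E)/E_0.\<close>
definition hat_class :: "'i filter \<Rightarrow> ('i \<Rightarrow> 'a::real_normed_vector) \<Rightarrow> ('i \<Rightarrow> 'a) set" where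
  "hat_class U f = {g \<in> fin_star U. infinitesimal_norm U (\<lambda>i. g i - f i)}"

definition hat_space :: "'i filter \<Rightarrow> ('i \<Rightarrow> 'a::real_normed_vector) set set" where
  "hat_space U = hat_class U ` fin_star U"

text \<open>Norm on E-hat: the standard part of the nonstandard norm, i.e. the U-limit of the norms.\<close>
definition hat_norm :: "'i filter \<Rightarrow> ('i \<Rightarrow> 'a::real_normed_vector) set \<Rightarrow> real" where
  "hat_norm U X = Lim U (\<lambda>i. norm ((SOME f. f \<in> X) i))"

text \<open>E_T: f finite, and for every standard eps > 0 there is a standard delta > 0 such that
  for every positive nonstandard t < delta (a U-class of reals t_i), ||*T(t) f - f|| < eps.\<close>
definition E_T :: "'i filter \<Rightarrow> (real \<Rightarrow> ('a::banach \<Rightarrow>\<^sub>L 'a)) \<Rightarrow> ('i \<Rightarrow> 'a) set" where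
  "E_T U T = {f \<in> fin_star U. \<forall>\<epsilon>>0. \<exists>\<delta>>0. \<forall>t :: 'i \<Rightarrow> real.
      eventually (\<lambda>i. 0 < t i \<and> t i < \<delta>) U \<longrightarrow>
      eventually (\<lambda>i. norm (T (t i) (f i) - f i) < \<epsilon>) U}"

definition hat_E_T :: "'i filter \<Rightarrow> (real \<Rightarrow> ('a::banach \<Rightarrow>\<^sub>L 'a)) \<Rightarrow> ('i \<Rightarrow> 'a) set set" where
  "hat_E_T U T = hat_class U ` E_T U T"

definition lq_add :: "'i filter \<Rightarrow> ('i \<Rightarrow> 'a::real_normed_vector) set \<Rightarrow> ('i \<Rightarrow> 'a) set \<Rightarrow> ('i \<Rightarrow> 'a) set" where
  "lq_add U X Y = lq_class U (\<lambda>i. (SOME f. f \<in> X) i + (SOME g. g \<in> Y) i)"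

definition lq_scale :: "'i filter \<Rightarrow> real \<Rightarrow> ('i \<Rightarrow> 'a::real_normed_vector) set \<Rightarrow> ('i \<Rightarrow> 'a) set" where
  "lq_scale U a X = lq_class U (\<lambda>i. a *\<^sub>R (SOME f. f \<in> X) i)"

definition hat_add :: "'i filter \<Rightarrow> ('i \<Rightarrow> 'a::real_normed_vector) set \<Rightarrow> ('i \<Rightarrow> 'a) set \<Rightarrow> ('i \<Rightarrow> 'a) set" where
  "hat_add U X Y = hat_class U (\<lambda>i. (SOME f. f \<in> X) i + (SOME g. g \<in> Y) i)"

definition hat_scale :: "'i filter \<Rightarrow> real \<Rightarrow> ('i \<Rightarrow> 'a::real_normed_vector) set \<Rightarrow> ('i \<Rightarrow> 'a) set" where
  "hat_scale U a X = hat_class U (\<lambda>i. a *\<^sub>R (SOME f. f \<in> X) i)"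

definition Phi :: "'i filter \<Rightarrow> ('i \<Rightarrow> 'a::real_normed_vector) set \<Rightarrow> ('i \<Rightarrow> 'a) set" where
  "Phi U X = hat_class U (SOME f. f \<in> X)"

end

theory Submission
  imports Defs
begin

text \<open>Both quotients identify two families when their difference tends to 0 along U, so Phi is
  well defined and injective; it is onto because a finite element of *E agrees U-almost
  everywhere with a bounded family. The U-limit of the norms exists since U is an ultrafilter,
  and truncating a representative at that limit plus epsilon shows that it is the quotient norm.

  Every element of m^T is S-continuous. Conversely, for f in E_T the S-continuity moduli hold
  uniformly in time on U-large sets of indices. Each f_i is regular up to some level k, and
  averaging it over a window adapted to k yields a family that is uniformly continuous under T,
  i.e. lies in m^T, and is infinitely close to f. The local boundedness of T needed for the
  averaging comes from the uniform boundedness principle.\<close>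

section \<open>Families vanishing along a filter\<close>

lemma infinitesimal_norm_iff_tendsto_zero:
  "infinitesimal_norm U f \<longleftrightarrow> (f \<longlongrightarrow> 0) U"
proof -
  have "infinitesimal_norm U f \<longleftrightarrow> (\<forall>e>0. eventually (\<lambda>i. norm (f i) < e) U)"
  proof
    assume inf: "infinitesimal_norm U f"
    show "\<forall>e>0. eventually (\<lambda>i. norm (f i) < e) U"
    proof (intro allI impI)
      fix e :: real assume "e > 0"
      then obtain n where n: "inverse (real (Suc n)) < e" using reals_Archimedean by blast
      have "eventually (\<lambda>i. norm (f i) < 1 / real (Suc n)) U"
        using inf[unfolded infinitesimal_norm_def, rule_format, of "Suc n"] by simp
      then show "eventually (\<lambda>i. norm (f i) < e) U"
        by (rule eventually_mono) (use n in \<open>simp add: inverse_eq_divide\<close>)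
    qed
  qed (simp add: infinitesimal_norm_def)
  then show ?thesis by (simp add: tendsto_iff dist_norm)
qed

lemma cU_iff: "f \<in> cU U \<longleftrightarrow> f \<in> linf \<and> (f \<longlongrightarrow> 0) U"
  by (simp add: cU_def tendsto_iff dist_norm)

lemma tendsto_zero_diff_cong:
  fixes f g h :: "'i \<Rightarrow> 'a::real_normed_vector"
  assumes "((\<lambda>i. f i - g i) \<longlongrightarrow> 0) U"
  shows "((\<lambda>i. h i - f i) \<longlongrightarrow> 0) U \<longleftrightarrow> ((\<lambda>i. h i - g i) \<longlongrightarrow> 0) U"
proof
  assume "((\<lambda>i. h i - f i) \<longlongrightarrow> 0) U"
  from tendsto_add[OF this assms] show "((\<lambda>i. h i - g i) \<longlongrightarrow> 0) U" by simp
next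
  assume "((\<lambda>i. h i - g i) \<longlongrightarrow> 0) U"
  from tendsto_diff[OF this assms] show "((\<lambda>i. h i - f i) \<longlongrightarrow> 0) U" by simp
qed

lemma linf_iff: "f \<in> linf \<longleftrightarrow> (\<exists>B. \<forall>i. norm (f i) \<le> B)"
  unfolding linf_def bounded_iff by auto

lemma linf_add: "f \<in> linf \<Longrightarrow> g \<in> linf \<Longrightarrow> (\<lambda>i. f i + g i) \<in> linf"
  by (simp add: linf_def bounded_plus_comp)

lemma linf_diff: "f \<in> linf \<Longrightarrow> g \<in> linf \<Longrightarrow> (\<lambda>i. f i - g i) \<in> linf"
  by (simp add: linf_def bounded_minus_comp)

lemma linf_scaleR: "f \<in> linf \<Longrightarrow> (\<lambda>i. a *\<^sub>R f i) \<in> linf"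
  by (simp add: linf_def bounded_scaleR_comp)

lemma linf_blinfun:
  fixes A :: "'a::real_normed_vector \<Rightarrow>\<^sub>L 'b::real_normed_vector"
  assumes "f \<in> linf"
  shows "(\<lambda>i. A (f i)) \<in> linf"
proof -
  have "bounded (A ` range f)"
    using assms by (intro bounded_linear_image blinfun.bounded_linear_right) (simp add: linf_def)
  then show ?thesis by (simp add: linf_def image_image)
qed

lemma zero_in_linf: "(\<lambda>i. 0) \<in> linf"
  unfolding linf_iff by (auto intro: exI[of _ 0])

lemma linf_imp_fin_star:
  assumes "f \<in> linf"
  shows "f \<in> fin_star U"
proof -
  obtain B where B: "\<And>i. norm (f i) \<le> B" using assms unfolding linf_iff by auto
  obtain n :: nat where "B < real n" using reals_Archimedean2 by blast
  with B have "\<forall>i. norm (f i) < real n" by (meson le_less_trans)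
  then show ?thesis unfolding fin_star_def finite_norm_def by (auto intro!: exI[of _ n])
qed

lemma norm_le_supnorm: "f \<in> linf \<Longrightarrow> norm (f i) \<le> supnorm f"
  unfolding supnorm_def linf_def by (rule cSUP_upper) (auto simp: bounded_iff bdd_above_def)

lemma supnorm_nonneg: "f \<in> linf \<Longrightarrow> 0 \<le> supnorm f"
  using norm_le_supnorm[of f undefined] norm_ge_zero[of "f undefined"] by linarith

lemma supnorm_le: "(\<And>i. norm (f i) \<le> B) \<Longrightarrow> supnorm f \<le> B"
  unfolding supnorm_def by (rule cSUP_least) auto

lemma linf_truncation:
  assumes "eventually (\<lambda>i. norm (f i) < B) U"
  obtains g where "g \<in> linf" "\<And>i. norm (g i) \<le> max B 0" "((\<lambda>i. g i - f i) \<longlongrightarrow> 0) U"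
proof
  let ?g = "\<lambda>i. if norm (f i) < B then f i else 0"
  show "norm (?g i) \<le> max B 0" for i by auto
  then show "?g \<in> linf" unfolding linf_iff by blast
  show "((\<lambda>i. ?g i - f i) \<longlongrightarrow> 0) U"
    by (rule tendsto_eventually) (use assms in \<open>auto elim: eventually_mono\<close>)
qed


section \<open>The map Phi\<close>

lemma hat_class_cong:
  assumes "((\<lambda>i. f i - g i) \<longlongrightarrow> 0) U"
  shows "hat_class U f = hat_class U g"
  unfolding hat_class_def infinitesimal_norm_iff_tendsto_zero
  by (simp add: tendsto_zero_diff_cong[OF assms])

lemma lq_class_cong:
  assumes "((\<lambda>i. f i - g i) \<longlongrightarrow> 0) U" "f \<in> linf" "g \<in> linf"
  shows "lq_class U f = lq_class U g"
  unfolding lq_class_def cU_iff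
  using assms(2,3) by (auto simp: linf_diff tendsto_zero_diff_cong[OF assms(1)])

lemma hat_class_self: "f \<in> fin_star U \<Longrightarrow> f \<in> hat_class U f"
  by (simp add: hat_class_def infinitesimal_norm_iff_tendsto_zero)

lemma lq_class_self: "f \<in> linf \<Longrightarrow> f \<in> lq_class U f"
  by (simp add: lq_class_def cU_iff zero_in_linf)

lemma hat_class_eqD:
  "hat_class U f = hat_class U g \<Longrightarrow> f \<in> fin_star U \<Longrightarrow> ((\<lambda>i. f i - g i) \<longlongrightarrow> 0) U"
  using hat_class_self[of f U] by (simp add: hat_class_def infinitesimal_norm_iff_tendsto_zero)

lemma some_hat_class:
  assumes "f \<in> fin_star U"
  shows "((\<lambda>i. (SOME g. g \<in> hat_class U f) i - f i) \<longlongrightarrow> 0) U"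
proof -
  have "(SOME g. g \<in> hat_class U f) \<in> hat_class U f"
    unfolding some_in_eq using hat_class_self[OF assms] by blast
  then show ?thesis by (simp add: hat_class_def infinitesimal_norm_iff_tendsto_zero)
qed

lemma some_lq_class:
  assumes "f \<in> linf"
  shows "(SOME g. g \<in> lq_class U f) \<in> linf"
    and "((\<lambda>i. (SOME g. g \<in> lq_class U f) i - f i) \<longlongrightarrow> 0) U"
proof -
  have "(SOME g. g \<in> lq_class U f) \<in> lq_class U f"
    unfolding some_in_eq using lq_class_self[OF assms] by blast
  then show "(SOME g. g \<in> lq_class U f) \<in> linf"
    and "((\<lambda>i. (SOME g. g \<in> lq_class U f) i - f i) \<longlongrightarrow> 0) U"
    by (simp_all add: lq_class_def cU_iff)
qed

lemma Phi_lq_class: "f \<in> linf \<Longrightarrow> Phi U (lq_class U f) = hat_class U f"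
  unfolding Phi_def by (rule hat_class_cong[OF some_lq_class(2)])

lemma lq_add_lq_class:
  assumes "f \<in> linf" "g \<in> linf"
  shows "lq_add U (lq_class U f) (lq_class U g) = lq_class U (\<lambda>i. f i + g i)"
  unfolding lq_add_def
proof (rule lq_class_cong)
  show "(\<lambda>i. (SOME f'. f' \<in> lq_class U f) i + (SOME g'. g' \<in> lq_class U g) i) \<in> linf"
    by (intro linf_add some_lq_class(1) assms)
  show "(\<lambda>i. f i + g i) \<in> linf" by (intro linf_add assms)
  show "((\<lambda>i. ((SOME f'. f' \<in> lq_class U f) i + (SOME g'. g' \<in> lq_class U g) i) - (f i + g i))
      \<longlongrightarrow> 0) U"
    using tendsto_add[OF some_lq_class(2)[OF assms(1)] some_lq_class(2)[OF assms(2)]]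
    by (simp add: algebra_simps)
qed

lemma hat_add_hat_class:
  assumes "f \<in> fin_star U" "g \<in> fin_star U"
  shows "hat_add U (hat_class U f) (hat_class U g) = hat_class U (\<lambda>i. f i + g i)"
  unfolding hat_add_def
  by (rule hat_class_cong)
     (use tendsto_add[OF some_hat_class[OF assms(1)] some_hat_class[OF assms(2)]]
      in \<open>simp add: algebra_simps\<close>)

lemma lq_scale_lq_class:
  assumes "f \<in> linf"
  shows "lq_scale U a (lq_class U f) = lq_class U (\<lambda>i. a *\<^sub>R f i)"
  unfolding lq_scale_def
proof (rule lq_class_cong)
  show "(\<lambda>i. a *\<^sub>R (SOME f'. f' \<in> lq_class U f) i) \<in> linf"
    by (intro linf_scaleR some_lq_class(1) assms)
  show "(\<lambda>i. a *\<^sub>R f i) \<in> linf" by (intro linf_scaleR assms)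
  show "((\<lambda>i. a *\<^sub>R (SOME f'. f' \<in> lq_class U f) i - a *\<^sub>R f i) \<longlongrightarrow> 0) U"
    using tendsto_scaleR[OF tendsto_const some_lq_class(2)[OF assms], of a]
    by (simp add: algebra_simps)
qed

lemma hat_scale_hat_class:
  assumes "f \<in> fin_star U"
  shows "hat_scale U a (hat_class U f) = hat_class U (\<lambda>i. a *\<^sub>R f i)"
  unfolding hat_scale_def
  by (rule hat_class_cong)
     (use tendsto_scaleR[OF tendsto_const some_hat_class[OF assms], of a]
      in \<open>simp add: algebra_simps\<close>)

lemma lq_spaceE:
  assumes "X \<in> lq_space U"
  obtains f where "f \<in> linf" "X = lq_class U f"
  using assms unfolding lq_space_def by blast

lemma bij_betw_Phi: "bij_betw (Phi U) (lq_space U) (hat_space U)"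
  unfolding bij_betw_def
proof
  show "inj_on (Phi U) (lq_space U)"
  proof (rule inj_onI)
    fix X Y assume "X \<in> lq_space U" "Y \<in> lq_space U" and Phi_eq: "Phi U X = Phi U Y"
    then obtain f g where f: "f \<in> linf" "X = lq_class U f" and g: "g \<in> linf" "Y = lq_class U g"
      by (meson lq_spaceE)
    have "hat_class U f = hat_class U g" using Phi_eq f g by (simp add: Phi_lq_class)
    then have "((\<lambda>i. f i - g i) \<longlongrightarrow> 0) U"
      using f(1) by (blast intro: hat_class_eqD linf_imp_fin_star)
    then show "X = Y" using f g by (simp add: lq_class_cong)
  qed
  show "Phi U ` lq_space U = hat_space U"
  proof
    show "Phi U ` lq_space U \<subseteq> hat_space U"
      unfolding lq_space_def hat_space_def
      by (auto simp: Phi_lq_class intro!: imageI linf_imp_fin_star)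
    show "hat_space U \<subseteq> Phi U ` lq_space U"
    proof
      fix Z assume "Z \<in> hat_space U"
      then obtain f n where Z: "Z = hat_class U f" and n: "eventually (\<lambda>i. norm (f i) < real n) U"
        unfolding hat_space_def fin_star_def finite_norm_def by blast
      obtain g where g: "g \<in> linf" "((\<lambda>i. g i - f i) \<longlongrightarrow> 0) U"
        using linf_truncation[OF n] by blast
      then have "Z = Phi U (lq_class U g)" by (simp add: Z Phi_lq_class hat_class_cong)
      then show "Z \<in> Phi U ` lq_space U" using g(1) unfolding lq_space_def by blast
    qed
  qed
qed

lemma Phi_lq_add:
  assumes "X \<in> lq_space U" "Y \<in> lq_space U"
  shows "Phi U (lq_add U X Y) = hat_add U (Phi U X) (Phi U Y)"
proof -
  obtain f g where f: "f \<in> linf" "X = lq_class U f" and g: "g \<in> linf" "Y = lq_class U g"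
    using assms by (meson lq_spaceE)
  have "Phi U (lq_add U X Y) = hat_class U (\<lambda>i. f i + g i)"
    by (simp add: f g lq_add_lq_class Phi_lq_class linf_add)
  also have "\<dots> = hat_add U (Phi U X) (Phi U Y)"
    using f g by (simp add: Phi_lq_class hat_add_hat_class linf_imp_fin_star)
  finally show ?thesis .
qed

lemma Phi_lq_scale:
  assumes "X \<in> lq_space U"
  shows "Phi U (lq_scale U a X) = hat_scale U a (Phi U X)"
proof -
  obtain f where f: "f \<in> linf" "X = lq_class U f" using assms by (rule lq_spaceE)
  have "Phi U (lq_scale U a X) = hat_class U (\<lambda>i. a *\<^sub>R f i)"
    by (simp add: f lq_scale_lq_class Phi_lq_class linf_scaleR)
  also have "\<dots> = hat_scale U a (Phi U X)"
    using f by (simp add: Phi_lq_class hat_scale_hat_class linf_imp_fin_star)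
  finally show ?thesis .
qed

lemma ultrafilter_tendsto_exists:
  fixes a :: "'i \<Rightarrow> real"
  assumes U: "is_ultrafilter U" and B: "\<And>i. \<bar>a i\<bar> \<le> B"
  shows "\<exists>L. (a \<longlongrightarrow> L) U"
proof -
  have nontriv: "U \<noteq> bot" and ultra: "\<And>P. eventually P U \<or> eventually (\<lambda>i. \<not> P i) U"
    using U unfolding is_ultrafilter_def by auto
  define S where "S = {r. eventually (\<lambda>i. r \<le> a i) U}"
  have "\<forall>i. -B \<le> a i" using B by (metis abs_le_iff minus_le_iff)
  then have "-B \<in> S" by (simp add: S_def always_eventually)
  then have "S \<noteq> {}" by blast
  have "r \<le> B" if "r \<in> S" for r
  proof (rule ccontr)
    assume "\<not> r \<le> B"
    have "eventually (\<lambda>i. r \<le> a i) U" using that by (simp add: S_def)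
    then have "eventually (\<lambda>i. False) U"
      by (rule eventually_mono) (use B \<open>\<not> r \<le> B\<close> in \<open>meson abs_le_iff order_trans\<close>)
    with nontriv show False by (simp add: eventually_False)
  qed
  then have "bdd_above S" by (auto simp: bdd_above_def)
  have "(a \<longlongrightarrow> Sup S) U"
  proof (rule order_tendstoI)
    fix y assume "y < Sup S"
    then obtain r where "r \<in> S" "y < r" using less_cSup_iff[OF \<open>S \<noteq> {}\<close> \<open>bdd_above S\<close>] by auto
    then show "eventually (\<lambda>i. y < a i) U" unfolding S_def by (auto elim: eventually_mono)
  next
    fix y assume "Sup S < y"
    show "eventually (\<lambda>i. a i < y) U"
    proof (rule ccontr)
      assume "\<not> eventually (\<lambda>i. a i < y) U"
      then have "y \<in> S" using ultra[of "\<lambda>i. a i < y"] unfolding S_def by (auto elim: eventually_mono)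
      then show False using cSup_upper[OF _ \<open>bdd_above S\<close>] \<open>Sup S < y\<close> by fastforce
    qed
  qed
  then show ?thesis by blast
qed

lemma tendsto_norm_cong:
  assumes "((\<lambda>i. norm (f i)) \<longlongrightarrow> L) U" "((\<lambda>i. g i - f i) \<longlongrightarrow> 0) U"
  shows "((\<lambda>i. norm (g i)) \<longlongrightarrow> L) U"
proof (rule Lim_transform[OF assms(1)])
  have "((\<lambda>i. norm (g i - f i)) \<longlongrightarrow> 0) U" using tendsto_norm_zero[OF assms(2)] .
  then show "((\<lambda>i. norm (g i) - norm (f i)) \<longlongrightarrow> 0) U"
    by (rule tendsto_0_le[where K = 1]) (simp add: norm_triangle_ineq3)
qed

lemma hat_norm_hat_class:
  assumes "U \<noteq> bot" "f \<in> fin_star U" "((\<lambda>i. norm (f i)) \<longlongrightarrow> L) U"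
  shows "hat_norm U (hat_class U f) = L"
  unfolding hat_norm_def
  by (rule tendsto_Lim[OF assms(1) tendsto_norm_cong[OF assms(3) some_hat_class[OF assms(2)]]])

lemma qnorm_lq_class:
  assumes nontriv: "U \<noteq> bot" and f: "f \<in> linf" and L: "((\<lambda>i. norm (f i)) \<longlongrightarrow> L) U"
  shows "qnorm (lq_class U f) = L"
proof -
  have lower: "L \<le> supnorm g" if "g \<in> lq_class U f" for g
  proof -
    have g: "g \<in> linf" "((\<lambda>i. g i - f i) \<longlongrightarrow> 0) U"
      using that unfolding lq_class_def cU_iff by auto
    show ?thesis
      by (rule tendsto_upperbound[OF tendsto_norm_cong[OF L g(2)] _ nontriv])
         (simp add: norm_le_supnorm[OF g(1)])
  qed
  have upper: "\<exists>g\<in>lq_class U f. supnorm g \<le> L + e" if "e > 0" for e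
  proof -
    have "0 \<le> L" by (rule tendsto_lowerbound[OF L _ nontriv]) simp
    obtain g where g: "g \<in> linf" "\<And>i. norm (g i) \<le> max (L + e) 0" "((\<lambda>i. g i - f i) \<longlongrightarrow> 0) U"
      using linf_truncation[OF order_tendstoD(2)[OF L, of "L + e"]] \<open>e > 0\<close> by auto
    have "g \<in> lq_class U f" using g f by (simp add: lq_class_def cU_iff linf_diff)
    moreover have "supnorm g \<le> L + e" using g(2) \<open>0 \<le> L\<close> \<open>e > 0\<close> by (intro supnorm_le) simp
    ultimately show ?thesis by blast
  qed
  have "bdd_below (supnorm ` lq_class U f)" using lower by (auto simp: bdd_below_def)
  show ?thesis
  proof (rule antisym)
    show "qnorm (lq_class U f) \<le> L"
    proof (rule field_le_epsilon)
      fix e :: real assume "e > 0"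
      then obtain g where "g \<in> lq_class U f" "supnorm g \<le> L + e" using upper by blast
      then show "qnorm (lq_class U f) \<le> L + e"
        unfolding qnorm_def using cINF_lower[OF \<open>bdd_below _\<close>] order_trans by blast
    qed
    show "L \<le> qnorm (lq_class U f)"
      unfolding qnorm_def using lq_class_self[OF f] by (intro cINF_greatest lower) auto
  qed
qed

lemma hat_norm_Phi:
  assumes U: "is_ultrafilter U" and X: "X \<in> lq_space U"
  shows "hat_norm U (Phi U X) = qnorm X"
proof -
  obtain f where f: "f \<in> linf" "X = lq_class U f" using X by (rule lq_spaceE)
  then obtain B where "\<And>i. \<bar>norm (f i)\<bar> \<le> B" unfolding linf_iff by auto
  then obtain L where L: "((\<lambda>i. norm (f i)) \<longlongrightarrow> L) U"
    using ultrafilter_tendsto_exists[OF U, of "\<lambda>i. norm (f i)"] by blast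
  have "U \<noteq> bot" using U unfolding is_ultrafilter_def by simp
  with f L show ?thesis
    by (simp add: Phi_lq_class hat_norm_hat_class qnorm_lq_class linf_imp_fin_star)
qed

section \<open>S-continuous elements and the space m^T\<close>

lemma E_T_uniform_modulus:
  assumes U: "is_ultrafilter U" and f: "f \<in> E_T U T" and "e > 0"
  shows "\<exists>r>0. eventually (\<lambda>i. \<forall>s. 0 < s \<and> s < r \<longrightarrow> norm (T s (f i) - f i) < e) U"
proof -
  obtain r where "r > 0" and r: "\<And>t. eventually (\<lambda>i. 0 < t i \<and> t i < r) U \<Longrightarrow>
      eventually (\<lambda>i. norm (T (t i) (f i) - f i) < e) U"
    using f \<open>e > 0\<close> unfolding E_T_def by blast
  have "eventually (\<lambda>i. \<forall>s. 0 < s \<and> s < r \<longrightarrow> norm (T s (f i) - f i) < e) U"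
  proof (rule ccontr)
    let ?bad = "\<lambda>i s. 0 < s \<and> s < r \<and> \<not> norm (T s (f i) - f i) < e"
    assume "\<not> ?thesis"
    then have "eventually (\<lambda>i. \<not> (\<forall>s. 0 < s \<and> s < r \<longrightarrow> norm (T s (f i) - f i) < e)) U"
      using U unfolding is_ultrafilter_def by blast
    then have "eventually (\<lambda>i. \<exists>s. ?bad i s) U" by (rule eventually_mono) auto
    \<comment> \<open>A bad time for U-almost every index is a nonstandard time below r violating the bound.\<close>
    then have bad: "eventually (\<lambda>i. ?bad i (SOME s. ?bad i s)) U"
      by (rule eventually_mono) (rule someI_ex)
    then have "eventually (\<lambda>i. norm (T (SOME s. ?bad i s) (f i) - f i) < e) U"
      by (intro r) (auto elim: eventually_mono)
    with bad have "eventually (\<lambda>i. False) U" by (auto elim: eventually_elim2)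
    then show False using U by (simp add: is_ultrafilter_def eventually_False)
  qed
  with \<open>r > 0\<close> show ?thesis by blast
qed

lemma E_T_moduli:
  fixes T :: "real \<Rightarrow> ('a::banach \<Rightarrow>\<^sub>L 'a)"
  assumes U: "is_ultrafilter U" and f: "f \<in> E_T U T" and "\<delta> > 0"
  shows "\<exists>d. \<forall>m. 0 < d m \<and> d m \<le> \<delta> \<and>
    eventually (\<lambda>i. \<forall>s. 0 < s \<and> s < d m \<longrightarrow> norm (T s (f i) - f i) < 1 / (real m + 1)) U"
proof -
  have "\<forall>m. \<exists>r. 0 < r \<and> r \<le> \<delta> \<and>
      eventually (\<lambda>i. \<forall>s. 0 < s \<and> s < r \<longrightarrow> norm (T s (f i) - f i) < 1 / (real m + 1)) U"
  proof
    fix m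
    obtain r where "r > 0"
      and "eventually (\<lambda>i. \<forall>s. 0 < s \<and> s < r \<longrightarrow> norm (T s (f i) - f i) < 1 / (real m + 1)) U"
      using E_T_uniform_modulus[OF U f, of "1 / (real m + 1)"] by auto
    then have "eventually (\<lambda>i. \<forall>s. 0 < s \<and> s < min r \<delta> \<longrightarrow> norm (T s (f i) - f i) < 1 / (real m + 1)) U"
      by (elim eventually_mono) simp
    then show "\<exists>r. 0 < r \<and> r \<le> \<delta> \<and>
        eventually (\<lambda>i. \<forall>s. 0 < s \<and> s < r \<longrightarrow> norm (T s (f i) - f i) < 1 / (real m + 1)) U"
      using \<open>r > 0\<close> \<open>\<delta> > 0\<close> by (intro exI[of _ "min r \<delta>"]) simp
  qed
  then show ?thesis by (rule choice)
qed

lemma mT_if_uniform_modulus: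
  fixes T :: "real \<Rightarrow> ('a::banach \<Rightarrow>\<^sub>L 'a)"
  assumes x: "x \<in> linf"
    and modulus: "\<And>e. e > 0 \<Longrightarrow> \<exists>r>0. \<forall>t i. 0 < t \<and> t < r \<longrightarrow> norm (T t (x i) - x i) \<le> e"
  shows "x \<in> mT T"
  unfolding mT_def
proof (intro CollectI conjI x tendstoI)
  fix e :: real assume "e > 0"
  then obtain r where "r > 0" and r: "\<And>t i. 0 < t \<Longrightarrow> t < r \<Longrightarrow> norm (T t (x i) - x i) \<le> e / 2"
    using modulus[of "e / 2"] by auto
  have "dist (supnorm (\<lambda>i. T t (x i) - x i)) 0 < e" if "0 < t" "t < r" for t
  proof -
    have "supnorm (\<lambda>i. T t (x i) - x i) \<le> e / 2" using r that by (intro supnorm_le)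
    moreover have "0 \<le> supnorm (\<lambda>i. T t (x i) - x i)"
      by (intro supnorm_nonneg linf_diff linf_blinfun x)
    ultimately show ?thesis using \<open>e > 0\<close> by (simp add: dist_real_def)
  qed
  then show "eventually (\<lambda>t. dist (supnorm (\<lambda>i. T t (x i) - x i)) 0 < e) (at_right 0)"
    unfolding eventually_at_right_field using \<open>r > 0\<close> by auto
qed

lemma mT_subset_E_T:
  fixes T :: "real \<Rightarrow> ('a::banach \<Rightarrow>\<^sub>L 'a)" and U :: "'i filter"
  shows "mT T \<subseteq> E_T U T"
proof
  fix x :: "'i \<Rightarrow> 'a" assume "x \<in> mT T"
  then have x: "x \<in> linf" and lim: "((\<lambda>t. supnorm (\<lambda>i. T t (x i) - x i)) \<longlongrightarrow> 0) (at_right 0)"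
    unfolding mT_def by auto
  have "\<exists>r>0. \<forall>t. eventually (\<lambda>i. 0 < t i \<and> t i < r) U \<longrightarrow>
      eventually (\<lambda>i. norm (T (t i) (x i) - x i) < e) U" if "e > 0" for e
  proof -
    obtain r where "r > 0" and r: "\<And>s. 0 < s \<Longrightarrow> s < r \<Longrightarrow> supnorm (\<lambda>i. T s (x i) - x i) < e"
      using order_tendstoD(2)[OF lim \<open>e > 0\<close>] unfolding eventually_at_right_field by auto
    have bound: "norm (T s (x i) - x i) < e" if "0 < s" "s < r" for s i
    proof -
      have "(\<lambda>i. T s (x i) - x i) \<in> linf" by (intro linf_diff linf_blinfun x)
      then have "norm (T s (x i) - x i) \<le> supnorm (\<lambda>i. T s (x i) - x i)" by (rule norm_le_supnorm)
      with r[OF that] show ?thesis by simp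
    qed
    show ?thesis
    proof (intro exI[of _ r] conjI allI impI \<open>r > 0\<close>)
      fix t :: "'i \<Rightarrow> real" assume "eventually (\<lambda>i. 0 < t i \<and> t i < r) U"
      then show "eventually (\<lambda>i. norm (T (t i) (x i) - x i) < e) U"
        by (rule eventually_mono) (use bound in auto)
    qed
  qed
  then show "x \<in> E_T U T" unfolding E_T_def using linf_imp_fin_star[OF x] by blast
qed

lemma zero_in_mT: "(\<lambda>i. 0) \<in> mT T"
  by (simp add: mT_def zero_in_linf supnorm_def)

lemma Phi_iota_mq_class:
  assumes x: "x \<in> mT T"
  shows "Phi U (iota U (mq_class U T x)) = hat_class U x"
proof -
  have "x \<in> mq_class U T x"
    using x zero_in_mT[of T] by (simp add: mq_class_def cU_iff zero_in_linf)
  define y where "y = (SOME y. y \<in> mq_class U T x)"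
  have "y \<in> mq_class U T x" unfolding y_def some_in_eq using \<open>x \<in> mq_class U T x\<close> by blast
  then have "y \<in> linf" "((\<lambda>i. y i - x i) \<longlongrightarrow> 0) U" by (auto simp: mq_class_def mT_def cU_iff)
  then show ?thesis unfolding iota_def y_def[symmetric] by (simp add: Phi_lq_class hat_class_cong)
qed

lemma Phi_iota_mq_space: "Phi U ` iota U ` mq_space U T = hat_class U ` mT T"
  unfolding mq_space_def image_image by (rule image_cong) (simp_all add: Phi_iota_mq_class)


section \<open>Averaging along a strongly continuous semigroup\<close>

lemma uniformly_bounded_on_ball:
  fixes A :: "nat \<Rightarrow> 'a::banach \<Rightarrow>\<^sub>L 'b::real_normed_vector"
  assumes pointwise: "\<And>x. \<exists>C. \<forall>n. norm (A n x) \<le> C"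
  obtains x0 r m where "r > 0" "\<And>n y. y \<in> ball x0 r \<Longrightarrow> norm (A n y) \<le> real m"
proof -
  define G where "G m = {x. \<forall>n. norm (A n x) \<le> real m}" for m :: nat
  have closed: "closed (G m)" for m
    unfolding G_def by (intro closed_Collect_all closed_Collect_le continuous_intros)
  have "x \<in> (\<Union>m. G m)" for x
  proof -
    obtain C where C: "\<forall>n. norm (A n x) \<le> C" using pointwise by blast
    obtain m :: nat where "C \<le> real m" using real_arch_simple by blast
    with C have "x \<in> G m" unfolding G_def mem_Collect_eq by (meson order_trans)
    then show ?thesis by blast
  qed
  then have cover: "(\<Union>m. G m) = UNIV" by blast
  have "\<exists>m. interior (G m) \<noteq> {}"
  proof (rule ccontr)
    assume "\<not> (\<exists>m. interior (G m) \<noteq> {})"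
    then have "Met_TC.mtopology interior_of \<Union> (range G) = {}"
      by (intro Met_TC.metric_Baire_category_alt) (auto simp: closed complete_UNIV)
    then show False using cover by simp
  qed
  then obtain m x0 where "x0 \<in> interior (G m)" by blast
  then obtain r where "r > 0" "ball x0 r \<subseteq> G m"
    by (meson interior_subset open_contains_ball_eq open_interior order_trans)
  then show thesis using that[of r x0 m] unfolding G_def by blast
qed

lemma uniform_boundedness:
  fixes A :: "nat \<Rightarrow> 'a::banach \<Rightarrow>\<^sub>L 'b::real_normed_vector"
  assumes "\<And>x. \<exists>C. \<forall>n. norm (A n x) \<le> C"
  shows "\<exists>K. \<forall>n. norm (A n) \<le> K"
proof -
  obtain x0 r m where r: "r > 0" and ball: "\<And>n y. y \<in> ball x0 r \<Longrightarrow> norm (A n y) \<le> real m"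
    using uniformly_bounded_on_ball[OF assms] by metis
  have bound: "norm (A n y) \<le> (4 * real m / r) * norm y" for n y
  proof (cases "y = 0")
    case False
    define c where "c = r / 2 / norm y"
    have c: "c > 0" using r False by (simp add: c_def)
    have "norm (A n (x0 + c *\<^sub>R y)) \<le> real m"
      using r False by (intro ball) (simp add: c_def dist_norm)
    moreover have "norm (A n x0) \<le> real m" using r by (intro ball) simp
    ultimately have "norm (A n (x0 + c *\<^sub>R y) - A n x0) \<le> 2 * real m"
      using norm_triangle_ineq4[of "A n (x0 + c *\<^sub>R y)" "A n x0"] by simp
    then have "c * norm (A n y) \<le> 2 * real m"
      using c by (simp add: blinfun.add_right blinfun.scaleR_right)
    then show ?thesis using c r False by (simp add: c_def field_simps)
  qed simp
  have "norm (A n) \<le> 4 * real m / r" for n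
    by (rule norm_blinfun_bound) (use r bound in auto)
  then show ?thesis by blast
qed

definition orbit_avg :: "(real \<Rightarrow> ('a::banach \<Rightarrow>\<^sub>L 'a)) \<Rightarrow> real \<Rightarrow> 'a \<Rightarrow> 'a" where
  "orbit_avg T h x = (1 / h) *\<^sub>R integral {0..h} (\<lambda>s. T s x)"

definition regular_upto ::
    "(real \<Rightarrow> ('a::real_normed_vector \<Rightarrow>\<^sub>L 'a)) \<Rightarrow> real \<Rightarrow> (nat \<Rightarrow> real) \<Rightarrow> nat \<Rightarrow> 'a \<Rightarrow> bool" where
  "regular_upto T M d n y \<longleftrightarrow>
     norm y < M \<and> (\<forall>m\<le>n. \<forall>s. 0 < s \<and> s < d m \<longrightarrow> norm (T s y - y) < 1 / (real m + 1))"

text \<open>For y regular up to level k but not up to k + 1, averaging over the window d k / 3 keeps the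
  moduli of the levels up to k and adds a Lipschitz bound at time scales below d k, so the range
  of the smoothing map is uniformly continuous under T.\<close>
definition smoothing :: "(real \<Rightarrow> ('a::banach \<Rightarrow>\<^sub>L 'a)) \<Rightarrow> real \<Rightarrow> (nat \<Rightarrow> real) \<Rightarrow> 'a \<Rightarrow> 'a" where
  "smoothing T M d y =
     (if \<not> regular_upto T M d 0 y then 0
      else if \<forall>n. regular_upto T M d n y then y
      else orbit_avg T (d (LEAST k. \<not> regular_upto T M d (Suc k) y) / 3) y)"

lemma regular_upto_antimono: "regular_upto T M d n y \<Longrightarrow> m \<le> n \<Longrightarrow> regular_upto T M d m y"
  by (auto simp: regular_upto_def)

lemma smoothing_cases:
  obtains (irregular) "\<not> regular_upto T M d 0 y" "smoothing T M d y = 0"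
  | (regular) "\<forall>n. regular_upto T M d n y" "smoothing T M d y = y"
  | (level) k where "regular_upto T M d k y" "\<not> regular_upto T M d (Suc k) y"
      "smoothing T M d y = orbit_avg T (d k / 3) y"
proof -
  consider "\<not> regular_upto T M d 0 y" | "\<forall>n. regular_upto T M d n y"
    | "regular_upto T M d 0 y" "\<exists>n. \<not> regular_upto T M d n y"
    by blast
  then show thesis
  proof cases
    case 1
    then show thesis by (intro irregular) (simp_all add: smoothing_def)
  next
    case 2
    then show thesis by (intro regular) (simp_all add: smoothing_def)
  next
    case 3
    define k where "k = (LEAST k. \<not> regular_upto T M d (Suc k) y)"
    have "\<exists>k. \<not> regular_upto T M d (Suc k) y" using 3 by (metis not0_implies_Suc)
    then have "\<not> regular_upto T M d (Suc k) y" unfolding k_def by (rule LeastI_ex)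
    moreover have "regular_upto T M d k y"
    proof (cases k)
      case (Suc j)
      then have "j < (LEAST k. \<not> regular_upto T M d (Suc k) y)" by (simp add: k_def)
      then show ?thesis using Suc by (blast dest: not_less_Least)
    qed (use 3 in simp)
    moreover have "smoothing T M d y = orbit_avg T (d k / 3) y"
    proof -
      have "\<not> \<not> regular_upto T M d 0 y" "\<not> (\<forall>n. regular_upto T M d n y)" using 3 by blast+
      then show ?thesis unfolding smoothing_def k_def by (simp only: if_not_P if_False)
    qed
    ultimately show thesis using level by blast
  qed
qed


lemma eventually_regular_upto:
  fixes T :: "real \<Rightarrow> ('a::real_normed_vector \<Rightarrow>\<^sub>L 'a)"
  assumes "eventually (\<lambda>i. norm (f i) < M) U"
    and "\<And>m. eventually (\<lambda>i. \<forall>s. 0 < s \<and> s < d m \<longrightarrow> norm (T s (f i) - f i) < 1 / (real m + 1)) U"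
  shows "eventually (\<lambda>i. regular_upto T M d n (f i)) U"
proof -
  have "eventually (\<lambda>i. \<forall>m\<in>{..n}. \<forall>s. 0 < s \<and> s < d m \<longrightarrow> norm (T s (f i) - f i) < 1 / (real m + 1)) U"
    by (rule eventually_ball_finite) (auto intro: assms(2))
  with assms(1) have "eventually (\<lambda>i. norm (f i) < M \<and>
      (\<forall>m\<in>{..n}. \<forall>s. 0 < s \<and> s < d m \<longrightarrow> norm (T s (f i) - f i) < 1 / (real m + 1))) U"
    by (rule eventually_conj)
  then show ?thesis unfolding regular_upto_def by (elim eventually_mono) auto
qed

context
  fixes T :: "real \<Rightarrow> ('a::banach \<Rightarrow>\<^sub>L 'a)"
  assumes sg: "strongly_continuous_semigroup T"
begin

lemma semigroup_zero_apply: "T 0 x = x"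
  using sg unfolding strongly_continuous_semigroup_def by simp

lemma semigroup_add_apply: "0 \<le> s \<Longrightarrow> 0 \<le> t \<Longrightarrow> T (s + t) x = T s (T t x)"
  using sg unfolding strongly_continuous_semigroup_def by simp

lemma strong_continuity: "((\<lambda>t. norm (T t x - x)) \<longlongrightarrow> 0) (at_right 0)"
  using sg unfolding strongly_continuous_semigroup_def by simp

lemma locally_bounded: "\<exists>\<delta>>0. \<exists>K\<ge>1. \<forall>s. 0 \<le> s \<and> s \<le> \<delta> \<longrightarrow> norm (T s) \<le> K"
proof (rule ccontr)
  assume not_bounded: "\<not> ?thesis"
  have unbounded: "\<exists>s. 0 \<le> s \<and> s \<le> \<delta> \<and> K < norm (T s)" if "\<delta> > 0" "K \<ge> 1" for \<delta> K
  proof (rule ccontr)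
    assume "\<nexists>s. 0 \<le> s \<and> s \<le> \<delta> \<and> K < norm (T s)"
    then have "\<forall>s. 0 \<le> s \<and> s \<le> \<delta> \<longrightarrow> norm (T s) \<le> K" by (auto simp: not_less)
    with that not_bounded show False by blast
  qed
  have "\<forall>n::nat. \<exists>s. 0 \<le> s \<and> s \<le> 1 / (real n + 1) \<and> real n + 1 < norm (T s)"
    by (intro allI unbounded) auto
  then obtain s where s: "\<And>n. 0 \<le> s n" "\<And>n. s n \<le> 1 / (real n + 1)"
    "\<And>n. real n + 1 < norm (T (s n))"
    by metis
  have "norm (T 0) \<le> 1"
    using sg unfolding strongly_continuous_semigroup_def by (simp add: norm_blinfun_id_le)
  then have "s n > 0" for n using s(1,3)[of n] by (cases "s n = 0") auto
  moreover have "s \<longlonglongrightarrow> 0"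
  proof (rule tendsto_sandwich[of "\<lambda>n. 0" _ _ "\<lambda>n. 1 / (real n + 1)"])
    show "(\<lambda>n. 1 / (real n + 1)) \<longlonglongrightarrow> 0"
      using LIMSEQ_inverse_real_of_nat by (simp add: inverse_eq_divide add.commute)
  qed (use s in auto)
  ultimately have to_zero: "filterlim s (at_right 0) sequentially"
    by (intro tendsto_imp_filterlim_at_right) auto
  have "\<exists>C. \<forall>n. norm (T (s n) x) \<le> C" for x
  proof -
    have "(\<lambda>n. norm (T (s n) x - x)) \<longlonglongrightarrow> 0"
      by (rule filterlim_compose[OF strong_continuity to_zero])
    then have "Bseq (\<lambda>n. norm (T (s n) x - x))" by (rule convergent_imp_Bseq[OF convergentI])
    then obtain C where C: "\<And>n. norm (T (s n) x - x) \<le> C" unfolding Bseq_def by auto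
    have "norm (T (s n) x) \<le> C + norm x" for n
      using C[of n] norm_triangle_ineq2[of "T (s n) x" x] by simp
    then show ?thesis by blast
  qed
  then obtain K where K: "\<And>n. norm (T (s n)) \<le> K" using uniform_boundedness[of "\<lambda>n. T (s n)"] by blast
  obtain n :: nat where "K \<le> real n" using real_arch_simple by blast
  then show False using K[of n] s(3)[of n] by simp
qed

context
  fixes \<delta> K :: real
  assumes \<delta>_pos: "\<delta> > 0" and K_ge_1: "K \<ge> 1" and bounded_near_0: "\<And>s. 0 \<le> s \<Longrightarrow> s \<le> \<delta> \<Longrightarrow> norm (T s) \<le> K"
begin

lemma norm_T_le:
  assumes "0 \<le> s" "s \<le> \<delta>"
  shows "norm (T s x) \<le> K * norm x"
proof -
  have "norm (T s x) \<le> norm (T s) * norm x" by (rule norm_blinfun)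
  also have "\<dots> \<le> K * norm x" using assms by (intro mult_right_mono bounded_near_0) auto
  finally show ?thesis .
qed

lemma norm_T_shift_le:
  assumes "0 \<le> a" "a \<le> \<delta>" "0 \<le> u"
  shows "norm (T (a + u) x - T a x) \<le> K * norm (T u x - x)"
proof -
  have "T (a + u) x - T a x = T a (T u x - x)"
    using assms by (simp add: semigroup_add_apply blinfun.diff_right)
  then show ?thesis using norm_T_le[OF assms(1,2)] by simp
qed

lemma continuous_on_orbit: "continuous_on {0..\<delta>} (\<lambda>s. T s x)"
  unfolding continuous_on_iff
proof (intro ballI allI impI)
  fix s0 e :: real assume s0: "s0 \<in> {0..\<delta>}" and "e > 0"
  then have "eventually (\<lambda>u. norm (T u x - x) < e / K) (at_right 0)"
    using K_ge_1 by (intro order_tendstoD(2)[OF strong_continuity]) simp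
  then obtain r where r: "r > 0" "\<And>u. 0 < u \<Longrightarrow> u < r \<Longrightarrow> norm (T u x - x) < e / K"
    unfolding eventually_at_right_field by auto
  have "dist (T s x) (T s0 x) < e" if s: "s \<in> {0..\<delta>}" "dist s s0 < r" for s
  proof -
    define a u where "a = min s s0" and "u = \<bar>s - s0\<bar>"
    have "dist (T s x) (T s0 x) = norm (T (a + u) x - T a x)"
      by (cases "s \<le> s0") (auto simp: a_def u_def dist_norm norm_minus_commute)
    also have "\<dots> \<le> K * norm (T u x - x)"
      using s s0 by (intro norm_T_shift_le) (auto simp: a_def u_def)
    also have "\<dots> < e"
    proof (cases "u = 0")
      case False
      then have "norm (T u x - x) < e / K" using r(2) s by (simp add: u_def dist_real_def)
      then show ?thesis using K_ge_1 by (simp add: field_simps)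
    qed (simp add: semigroup_zero_apply \<open>e > 0\<close>)
    finally show ?thesis .
  qed
  then show "\<exists>r>0. \<forall>s\<in>{0..\<delta>}. dist s s0 < r \<longrightarrow> dist (T s x) (T s0 x) < e"
    using r(1) by blast
qed

lemma orbit_integrable_on: "0 \<le> a \<Longrightarrow> b \<le> \<delta> \<Longrightarrow> (\<lambda>s. T s x) integrable_on {a..b}"
  by (rule integrable_continuous_interval, rule continuous_on_subset[OF continuous_on_orbit]) auto

lemma norm_orbit_avg_minus_le:
  assumes "0 < h" "h \<le> \<delta>" "\<And>s. s \<in> {0..h} \<Longrightarrow> norm (T s x - x) \<le> \<eta>"
  shows "norm (orbit_avg T h x - x) \<le> \<eta>"
proof -
  have "orbit_avg T h x - x = (1 / h) *\<^sub>R integral {0..h} (\<lambda>s. T s x - x)"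
    using assms(1,2) integral_diff[OF orbit_integrable_on integrable_const_ivl, of 0 h x x]
    by (simp add: orbit_avg_def content_real scaleR_diff_right)
  moreover have "norm (integral {0..h} (\<lambda>s. T s x - x)) \<le> \<eta> * (h - 0)"
    using assms by (intro integral_bound) (auto intro!: continuous_intros
        continuous_on_subset[OF continuous_on_orbit])
  ultimately show ?thesis using assms(1) by (simp add: field_simps)
qed

lemma norm_orbit_avg_le:
  assumes "0 < h" "h \<le> \<delta>"
  shows "norm (orbit_avg T h x) \<le> K * norm x"
proof -
  have "norm (integral {0..h} (\<lambda>s. T s x)) \<le> (K * norm x) * (h - 0)"
    using assms norm_T_le
    by (intro integral_bound) (auto intro: continuous_on_subset[OF continuous_on_orbit])
  then show ?thesis using assms(1) by (simp add: orbit_avg_def field_simps)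
qed

lemma orbit_avg_diff:
  assumes "h \<le> \<delta>"
  shows "orbit_avg T h (x - y) = orbit_avg T h x - orbit_avg T h y"
proof -
  have "integral {0..h} (\<lambda>s. T s (x - y)) = integral {0..h} (\<lambda>s. T s x - T s y)"
    by (simp add: blinfun.diff_right)
  also have "\<dots> = integral {0..h} (\<lambda>s. T s x) - integral {0..h} (\<lambda>s. T s y)"
    using assms by (intro integral_diff orbit_integrable_on) auto
  finally show ?thesis by (simp add: orbit_avg_def scaleR_diff_right)
qed

lemma T_orbit_avg_commute:
  assumes "h \<le> \<delta>" "0 \<le> t"
  shows "T t (orbit_avg T h x) = orbit_avg T h (T t x)"
proof -
  have "T t (integral {0..h} (\<lambda>s. T s x)) = integral {0..h} (\<lambda>s. T t (T s x))"
    using assms(1) by (intro integral_linear[symmetric, unfolded o_def] orbit_integrable_on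
        blinfun.bounded_linear_right) auto
  also have "\<dots> = integral {0..h} (\<lambda>s. T s (T t x))"
    using assms(2) by (intro integral_cong) (simp add: semigroup_add_apply[symmetric] add.commute)
  finally show ?thesis by (simp add: orbit_avg_def blinfun.scaleR_right)
qed

lemma orbit_avg_modulus_le:
  assumes "0 < h" "h \<le> \<delta>" "0 \<le> t"
  shows "norm (T t (orbit_avg T h x) - orbit_avg T h x) \<le> K * norm (T t x - x)"
  using assms norm_orbit_avg_le[of h "T t x - x"]
  by (simp add: T_orbit_avg_commute orbit_avg_diff)

lemma orbit_avg_modulus_le_linear:
  assumes h: "0 < h" and t: "0 \<le> t" "h + t \<le> \<delta>"
    and C: "\<And>s. s \<in> {0..h + t} \<Longrightarrow> norm (T s x) \<le> C"
  shows "norm (T t (orbit_avg T h x) - orbit_avg T h x) \<le> 2 * t * C / h"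
proof -
  let ?I = "\<lambda>a b. integral {a..b} (\<lambda>s. T s x)"
  have "T t (?I 0 h) = integral {0..h} (T t \<circ> (\<lambda>s. T s x))"
    by (rule integral_linear[symmetric, OF orbit_integrable_on blinfun.bounded_linear_right])
       (use h t in auto)
  also have "\<dots> = integral {0..h} ((\<lambda>s. T s x) \<circ> (+) t)"
    by (rule integral_cong) (use t in \<open>simp add: semigroup_add_apply\<close>)
  also have "\<dots> = ?I t (h + t)"
    by (simp add: integral_shift_Icc_real add.commute)
  finally have shifted: "T t (?I 0 h) = ?I t (h + t)" .
  have "?I 0 t + ?I t (h + t) = ?I 0 (h + t)"
    by (rule Henstock_Kurzweil_Integration.integral_combine) (use h t in \<open>auto intro: orbit_integrable_on\<close>)
  moreover have "?I 0 h + ?I h (h + t) = ?I 0 (h + t)"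
    by (rule Henstock_Kurzweil_Integration.integral_combine) (use h t in \<open>auto intro: orbit_integrable_on\<close>)
  ultimately have diff: "T t (?I 0 h) - ?I 0 h = ?I h (h + t) - ?I 0 t"
    using shifted by (simp add: algebra_simps)
  have "norm (?I h (h + t)) \<le> C * (h + t - h)"
    by (rule integral_bound) (use h t C in \<open>auto intro: continuous_on_subset[OF continuous_on_orbit]\<close>)
  moreover have "norm (?I 0 t) \<le> C * (t - 0)"
    by (rule integral_bound) (use h t C in \<open>auto intro: continuous_on_subset[OF continuous_on_orbit]\<close>)
  ultimately have "norm (T t (?I 0 h) - ?I 0 h) \<le> 2 * t * C"
    unfolding diff using norm_triangle_ineq4[of "?I h (h + t)" "?I 0 t"] by (simp add: algebra_simps)
  moreover have "T t (orbit_avg T h x) - orbit_avg T h x = (1 / h) *\<^sub>R (T t (?I 0 h) - ?I 0 h)"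
    by (simp add: orbit_avg_def blinfun.scaleR_right scaleR_diff_right)
  ultimately show ?thesis using h by (simp add: divide_right_mono)
qed

context
  fixes M :: real and d :: "nat \<Rightarrow> real"
  assumes M_nonneg: "0 \<le> M" and d_pos: "\<And>m. 0 < d m" and d_le: "\<And>m. d m \<le> \<delta>"
begin

lemma regular_upto_orbit_near:
  assumes "regular_upto T M d k y" "0 \<le> s" "s < d k"
  shows "norm (T s y - y) \<le> 1 / (real k + 1)"
  using assms by (cases "s = 0") (auto simp: regular_upto_def semigroup_zero_apply less_imp_le)

lemma norm_smoothing_le: "norm (smoothing T M d y) \<le> K * M"
proof (cases rule: smoothing_cases[of T M d y])
  case irregular
  then show ?thesis using K_ge_1 M_nonneg by simp
next
  case regular
  then have "norm y \<le> M" by (simp add: regular_upto_def)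
  also have "M \<le> K * M" using K_ge_1 M_nonneg by (simp add: mult_le_cancel_right1)
  finally show ?thesis using regular by simp
next
  case (level k)
  have "norm (orbit_avg T (d k / 3) y) \<le> K * norm y"
    using d_pos[of k] d_le[of k] by (intro norm_orbit_avg_le) auto
  also have "\<dots> \<le> K * M"
    using level(1) K_ge_1 by (intro mult_left_mono) (auto simp: regular_upto_def)
  finally show ?thesis using level by simp
qed

lemma norm_smoothing_minus_le:
  assumes "regular_upto T M d n y"
  shows "norm (smoothing T M d y - y) \<le> 1 / (real n + 1)"
proof (cases rule: smoothing_cases[of T M d y])
  case irregular
  then show ?thesis using regular_upto_antimono[OF assms, of 0] by simp
next
  case (level k)
  have "n \<le> k"
  proof (rule ccontr)
    assume "\<not> n \<le> k"
    with regular_upto_antimono[OF assms, of "Suc k"] level(2) show False by simp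
  qed
  have "norm (orbit_avg T (d k / 3) y - y) \<le> 1 / (real k + 1)"
    using d_pos[of k] d_le[of k] level(1)
    by (intro norm_orbit_avg_minus_le regular_upto_orbit_near) auto
  also have "\<dots> \<le> 1 / (real n + 1)" using \<open>n \<le> k\<close> by (simp add: frac_le)
  finally show ?thesis using level(3) by simp
qed simp

lemma smoothing_modulus_regular:
  assumes reg: "regular_upto T M d n y" and t: "0 < t" "t < d n"
  shows "norm (T t (smoothing T M d y) - smoothing T M d y) \<le> K / (real n + 1)"
proof -
  have modulus: "norm (T t z - z) < 1 / (real n + 1)" if "regular_upto T M d n z" for z
    using that t by (auto simp: regular_upto_def)
  show ?thesis
  proof (cases rule: smoothing_cases[of T M d y])
    case irregular
    then show ?thesis using regular_upto_antimono[OF reg, of 0] by simp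
  next
    case regular
    have "1 / (real n + 1) \<le> K / (real n + 1)" using K_ge_1 by (simp add: divide_right_mono)
    then show ?thesis using modulus[OF reg] regular by simp
  next
    case (level k)
    have "n \<le> k"
    proof (rule ccontr)
      assume "\<not> n \<le> k"
      with regular_upto_antimono[OF reg, of "Suc k"] level(2) show False by simp
    qed
    have "norm (T t (orbit_avg T (d k / 3) y) - orbit_avg T (d k / 3) y) \<le> K * norm (T t y - y)"
      using d_pos[of k] d_le[of k] t
      by (intro orbit_avg_modulus_le) auto
    also have "\<dots> \<le> K * (1 / (real n + 1))"
      using modulus[OF reg] K_ge_1 by (intro mult_left_mono) auto
    finally show ?thesis using level(3) by simp
  qed
qed

lemma smoothing_modulus_level:
  assumes reg: "regular_upto T M d k y" and t: "0 \<le> t" "t \<le> d k / 3"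
  shows "norm (T t (orbit_avg T (d k / 3) y) - orbit_avg T (d k / 3) y) \<le> 6 * t * (M + 1) / d k"
proof -
  have "norm (T s y) \<le> M + 1" if "s \<in> {0..d k / 3 + t}" for s
  proof -
    have "norm (T s y - y) \<le> 1 / (real k + 1)"
      using that t d_pos[of k] by (intro regular_upto_orbit_near[OF reg]) auto
    also have "\<dots> \<le> 1" by simp
    finally show ?thesis
      using reg norm_triangle_ineq2[of "T s y" y] by (auto simp: regular_upto_def)
  qed
  then have "norm (T t (orbit_avg T (d k / 3) y) - orbit_avg T (d k / 3) y)
      \<le> 2 * t * (M + 1) / (d k / 3)"
    using d_pos[of k] d_le[of k] t
    by (intro orbit_avg_modulus_le_linear) auto
  then show ?thesis by simp
qed

lemma smoothing_modulus_irregular: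
  assumes irregular: "\<not> regular_upto T M d n y" and t: "0 < t" and "0 \<le> e"
    and small: "\<And>k. k < n \<Longrightarrow> t \<le> d k / 3 \<and> 6 * t * (M + 1) \<le> e * d k"
  shows "norm (T t (smoothing T M d y) - smoothing T M d y) \<le> e"
proof (cases rule: smoothing_cases[of T M d y])
  case irregular
  then show ?thesis using \<open>0 \<le> e\<close> by simp
next
  case regular
  then show ?thesis using irregular by blast
next
  case (level k)
  have "k < n"
  proof (rule ccontr)
    assume "\<not> k < n"
    with regular_upto_antimono[OF level(1), of n] irregular show False by simp
  qed
  have "norm (T t (smoothing T M d y) - smoothing T M d y) \<le> 6 * t * (M + 1) / d k"
    using level(3) smoothing_modulus_level[OF level(1)] t small[OF \<open>k < n\<close>] by simp
  also have "\<dots> \<le> e" using small[OF \<open>k < n\<close>] d_pos[of k] by (simp add: divide_le_eq)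
  finally show ?thesis .
qed

lemma smoothing_equicontinuous:
  assumes "e > 0"
  shows "\<exists>r>0. \<forall>t y. 0 < t \<and> t < r \<longrightarrow> norm (T t (smoothing T M d y) - smoothing T M d y) \<le> e"
proof -
  obtain n :: nat where "K / e < real n" using reals_Archimedean2 by blast
  then have Kn: "K / (real n + 1) \<le> e" using \<open>e > 0\<close> by (simp add: field_simps)
  define r where "r = Min (insert (d n) ((\<lambda>k. min (d k / 3) (e * d k / (6 * (M + 1)))) ` {..<n}))"
  have "r > 0" unfolding r_def using d_pos \<open>e > 0\<close> M_nonneg by (subst Min_gr_iff) auto
  have "r \<le> d n" unfolding r_def by (rule Min_le) auto
  have r_le: "r \<le> min (d k / 3) (e * d k / (6 * (M + 1)))" if "k < n" for k
    unfolding r_def using that by (intro Min_le) auto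
  have "norm (T t (smoothing T M d y) - smoothing T M d y) \<le> e" if t: "0 < t" "t < r" for t y
  proof (cases "regular_upto T M d n y")
    case True
    have "norm (T t (smoothing T M d y) - smoothing T M d y) \<le> K / (real n + 1)"
      using t \<open>r \<le> d n\<close> by (intro smoothing_modulus_regular[OF True]) auto
    with Kn show ?thesis by linarith
  next
    case False
    have "t \<le> d k / 3 \<and> 6 * t * (M + 1) \<le> e * d k" if "k < n" for k
    proof
      show "t \<le> d k / 3" using t r_le[OF that] by simp
      have "6 * t * (M + 1) \<le> 6 * r * (M + 1)" using t M_nonneg by (intro mult_right_mono) auto
      also have "\<dots> \<le> e * d k" using r_le[OF that] M_nonneg by (simp add: field_simps)
      finally show "6 * t * (M + 1) \<le> e * d k" .
    qed
    then show ?thesis using False t \<open>e > 0\<close> by (intro smoothing_modulus_irregular) auto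
  qed
  with \<open>r > 0\<close> show ?thesis by blast
qed

lemma smoothing_comp_in_mT: "(\<lambda>i. smoothing T M d (f i)) \<in> mT T"
proof (rule mT_if_uniform_modulus)
  show "(\<lambda>i. smoothing T M d (f i)) \<in> linf" unfolding linf_iff using norm_smoothing_le by blast
  fix e :: real assume "e > 0"
  then obtain r where "r > 0" and r: "\<And>t y. 0 < t \<Longrightarrow> t < r \<Longrightarrow>
      norm (T t (smoothing T M d y) - smoothing T M d y) \<le> e"
    using smoothing_equicontinuous[OF \<open>e > 0\<close>] by blast
  show "\<exists>r>0. \<forall>t i. 0 < t \<and> t < r \<longrightarrow>
      norm (T t (smoothing T M d (f i)) - smoothing T M d (f i)) \<le> e"
    using \<open>r > 0\<close> r by blast
qed

lemma smoothing_comp_tendsto: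
  assumes regular: "\<And>n. eventually (\<lambda>i. regular_upto T M d n (f i)) U"
  shows "((\<lambda>i. smoothing T M d (f i) - f i) \<longlongrightarrow> 0) U"
proof (rule tendstoI)
  fix e :: real assume "e > 0"
  then obtain n where n: "inverse (real (Suc n)) < e" using reals_Archimedean by blast
  show "eventually (\<lambda>i. dist (smoothing T M d (f i) - f i) 0 < e) U"
    using regular[of n]
  proof (rule eventually_mono)
    fix i assume "regular_upto T M d n (f i)"
    then have "norm (smoothing T M d (f i) - f i) \<le> 1 / (real n + 1)"
      by (rule norm_smoothing_minus_le)
    with n show "dist (smoothing T M d (f i) - f i) 0 < e"
      by (simp add: inverse_eq_divide add.commute)
  qed
qed

end

lemma E_T_approx_by_mT:
  assumes U: "is_ultrafilter U" and f: "f \<in> E_T U T"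
  obtains x where "x \<in> mT T" "((\<lambda>i. x i - f i) \<longlongrightarrow> 0) U"
proof -
  obtain M :: nat where M: "eventually (\<lambda>i. norm (f i) < real M) U"
    using f unfolding E_T_def fin_star_def finite_norm_def by blast
  obtain d where d: "\<forall>m. 0 < d m \<and> d m \<le> \<delta> \<and>
      eventually (\<lambda>i. \<forall>s. 0 < s \<and> s < d m \<longrightarrow> norm (T s (f i) - f i) < 1 / (real m + 1)) U"
    using E_T_moduli[OF U f \<delta>_pos] by (rule exE)
  then have d_pos: "\<And>m. 0 < d m" and d_le: "\<And>m. d m \<le> \<delta>" and d_modulus:
    "\<And>m. eventually (\<lambda>i. \<forall>s. 0 < s \<and> s < d m \<longrightarrow> norm (T s (f i) - f i) < 1 / (real m + 1)) U"
    by auto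
  have M_nonneg: "0 \<le> real M" by simp
  note smoothing_comp = smoothing_comp_in_mT smoothing_comp_tendsto
  note smoothing_comp = smoothing_comp[where M = "real M" and d = d, OF M_nonneg d_pos d_le]
  show thesis
    by (rule that[OF smoothing_comp(1) smoothing_comp(2)[OF eventually_regular_upto[OF M d_modulus]]])
qed

end

lemma hat_E_T_eq:
  assumes U: "is_ultrafilter U"
  shows "hat_E_T U T = hat_class U ` mT T"
  unfolding hat_E_T_def
proof
  obtain \<delta> K where \<delta>: "\<delta> > 0" and K: "K \<ge> 1"
    and bound: "\<And>s. 0 \<le> s \<Longrightarrow> s \<le> \<delta> \<Longrightarrow> norm (T s) \<le> K"
    using locally_bounded by blast
  show "hat_class U ` E_T U T \<subseteq> hat_class U ` mT T"
  proof
    fix Z assume "Z \<in> hat_class U ` E_T U T"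
    then obtain f where f: "f \<in> E_T U T" "Z = hat_class U f" by blast
    obtain x where "x \<in> mT T" "((\<lambda>i. x i - f i) \<longlongrightarrow> 0) U"
      using E_T_approx_by_mT[OF \<delta> K bound U f(1)] by blast
    then show "Z \<in> hat_class U ` mT T" using f(2) hat_class_cong by blast
  qed
  show "hat_class U ` mT T \<subseteq> hat_class U ` E_T U T" using mT_subset_E_T by blast
qed

end

theorem mainTheorem1:
  fixes T :: "real \<Rightarrow> ('a::banach \<Rightarrow>\<^sub>L 'a)" and U :: "'i filter"
  assumes "strongly_continuous_semigroup T"
    and "is_ultrafilter U" and "countably_incomplete U"
  shows "(\<forall>f::'i \<Rightarrow> 'a. f \<in> linf \<longrightarrow> Phi U (lq_class U f) = hat_class U f)
    \<and> bij_betw (Phi U) (lq_space U :: ('i \<Rightarrow> 'a) set set) (hat_space U)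
    \<and> (\<forall>X\<in>lq_space U :: ('i \<Rightarrow> 'a) set set. \<forall>Y\<in>lq_space U. \<forall>a::real.
          Phi U (lq_add U X Y) = hat_add U (Phi U X) (Phi U Y)
        \<and> Phi U (lq_scale U a X) = hat_scale U a (Phi U X))
    \<and> (\<forall>X\<in>lq_space U :: ('i \<Rightarrow> 'a) set set. hat_norm U (Phi U X) = qnorm X)
    \<and> Phi U ` iota U ` mq_space U T = hat_E_T U T"
  using assms(1,2)
  by (simp add: Phi_lq_class bij_betw_Phi Phi_lq_add Phi_lq_scale hat_norm_Phi Phi_iota_mq_space
      hat_E_T_eq)

end
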